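(* Let $S\subset\mathbb{R}^n$ be a smooth cylinder hypersurface with axis vector $e$, and consider rolling of the particle on $S$ under the constant force $f=(0,-mge)$. A path $q(t)=(A(t),a(t))\in SO(n)\times S$ that solves the constrained Newton's equation for this rolling motion is the solution of an initial value problem for the system $$\dot a=rU\nu_a,\qquad \dot A=UA,\qquad \dot U=-\frac{1}{(1+\gamma^2)r}\big(r^2U\mathbb{S}_aU\nu_a-ge\big)\wedge\nu_a,$$ where $U=\dot AA^{-1}\in\mathfrak{so}(n)$.
   Context: The particle is a ball of radius $r>0$ with rotationally symmetric mass distribution of total mass $m$ and second-moment matrix per unit mass $\lambda I$, $\lambda=(r\gamma)^2/2$, $\gamma>0$. $S$ is the hypersurface of positions of the center of the particle, $\nu_a$ its unit normal at $a$ (pointing into the region containing the centers), and $\mathbb{S}_a$ its shape operator: the symmetric map of $T_aS$ with $\mathbb{S}_av=-D_v\nu$ (directional derivative). For $a,b\in\mathbb{R}^n$, $a\wedge b\in\mathfrak{so}(n)$ is $(a\wedge b)x=(a\cdot x)b-(b\cdot x)a$. On $M=SO(n)\times S$ use the kinetic energy metric $\langle(U_\xi A,u_\xi),(U_\eta A,u_\eta)\rangle=m\{\tfrac{(r\gamma)^2}{2}\mathrm{Tr}(U_\xi U_\eta^\dagger)+u_\xi\cdot u_\eta\}$, with Levi-Civita connection $\nabla$; for $\dot q=(UA,u)$ one has $\frac{\nabla\dot q}{dt}=(\dot UA,\frac{Du}{dt})$, $D$ the Levi-Civita connection of $S$. The no-slip space at $q=(A,a)$ is $\mathfrak{S}_q=\{(UA,u):u=rU\nu_a\}$,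 and $\mathfrak{S}^\perp_q$ denotes its orthogonal complement inside $T_qM$ (with respect to the kinetic energy metric). A path satisfies the constrained Newton's equation if $\dot q(t)\in\mathfrak{S}_{q(t)}$ for all $t$ and $\frac{\nabla\dot q}{dt}=m^{-1}f+N$ for some $N(t)\in\mathfrak{S}^\perp_{q(t)}$. *)

theory Defs
  imports "HOL-Analysis.Analysis"
begin

fun iter_dd :: "'a::real_normed_vector list \<Rightarrow> ('a \<Rightarrow> 'b::real_normed_vector) \<Rightarrow> 'a \<Rightarrow> 'b" where
  "iter_dd [] f = f"
| "iter_dd (v # vs) f = (\<lambda>x. frechet_derivative (iter_dd vs f) (at x) v)"

definition smooth_fun :: "('a::real_normed_vector \<Rightarrow> 'b::real_normed_vector) \<Rightarrow> bool" where
  "smooth_fun f \<longleftrightarrow> (\<forall>vs x. iter_dd vs f differentiable (at x))"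

definition SOn :: "(real^'n^'n) set" where
  "SOn = {A. orthogonal_matrix A \<and> det A = 1}"

definition son :: "(real^'n^'n) set" where
  "son = {U. transpose U = - U}"

text \<open>Wedge: (a \<and> b) x = (a \<bullet> x) b - (b \<bullet> x) a, as a matrix.\<close>
definition wedge :: "real^'n \<Rightarrow> real^'n \<Rightarrow> real^'n^'n" where
  "wedge a b = (\<chi> i j. b $ i * a $ j - a $ i * b $ j)"

text \<open>Smooth hypersurface S with unit normal field nu: S is a regular level set
  of a smooth function phi and nu is the normalised gradient of phi
  (defined on all of R^n, so that its derivative at points of S makes sense).\<close>
definition smooth_hypersurface :: "(real^'n) set \<Rightarrow> (real^'n \<Rightarrow> real^'n) \<Rightarrow> bool" where
  "smooth_hypersurface S \<nu> \<longleftrightarrow>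
     (\<exists>\<phi> G. smooth_fun \<phi> \<and> S = {x. \<phi> x = 0} \<and>
        (\<forall>x. (\<phi> has_derivative (\<lambda>v. G x \<bullet> v)) (at x)) \<and>
        (\<forall>x\<in>S. G x \<noteq> 0) \<and> (\<forall>x. \<nu> x = G x /\<^sub>R norm (G x)))"

definition cylinder_hypersurface :: "(real^'n) set \<Rightarrow> (real^'n \<Rightarrow> real^'n) \<Rightarrow> real^'n \<Rightarrow> bool" where
  "cylinder_hypersurface S \<nu> e \<longleftrightarrow> smooth_hypersurface S \<nu> \<and> norm e = 1 \<and>
     (\<forall>a\<in>S. \<forall>s::real. a + s *\<^sub>R e \<in> S)"

definition tangent_S :: "(real^'n \<Rightarrow> real^'n) \<Rightarrow> real^'n \<Rightarrow> (real^'n) set" where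
  "tangent_S \<nu> a = {v. v \<bullet> \<nu> a = 0}"

definition shape_op :: "(real^'n \<Rightarrow> real^'n) \<Rightarrow> real^'n \<Rightarrow> real^'n \<Rightarrow> real^'n" where
  "shape_op \<nu> a v = - frechet_derivative \<nu> (at a) v"

text \<open>Tangent space of M = SO(n) x S at q = (A,a): pairs (U A, u), U in so(n), u in T_a S.\<close>
definition tangent_M :: "(real^'n \<Rightarrow> real^'n) \<Rightarrow> real^'n^'n \<Rightarrow> real^'n \<Rightarrow> ((real^'n^'n) \<times> (real^'n)) set" where
  "tangent_M \<nu> A a = {(X, u). X ** matrix_inv A \<in> son \<and> u \<in> tangent_S \<nu> a}"

definition kin_metric :: "real \<Rightarrow> real \<Rightarrow> real \<Rightarrow> real^'n^'n \<Rightarrow>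
    ((real^'n^'n) \<times> (real^'n)) \<Rightarrow> ((real^'n^'n) \<times> (real^'n)) \<Rightarrow> real" where
  "kin_metric m r \<gamma> A \<xi> \<eta> =
     m * ((r * \<gamma>)\<^sup>2 / 2 * trace ((fst \<xi> ** matrix_inv A) ** transpose (fst \<eta> ** matrix_inv A))
          + snd \<xi> \<bullet> snd \<eta>)"

definition noslip :: "real \<Rightarrow> (real^'n \<Rightarrow> real^'n) \<Rightarrow> real^'n^'n \<Rightarrow> real^'n \<Rightarrow> ((real^'n^'n) \<times> (real^'n)) set" where
  "noslip r \<nu> A a = {(X, u) \<in> tangent_M \<nu> A a. u = r *\<^sub>R ((X ** matrix_inv A) *v \<nu> a)}"

definition noslip_perp :: "real \<Rightarrow> real \<Rightarrow> real \<Rightarrow> (real^'n \<Rightarrow> real^'n) \<Rightarrow> real^'n^'n \<Rightarrow> real^'n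
    \<Rightarrow> ((real^'n^'n) \<times> (real^'n)) set" where
  "noslip_perp m r \<gamma> \<nu> A a = {w \<in> tangent_M \<nu> A a. \<forall>z \<in> noslip r \<nu> A a. kin_metric m r \<gamma> A w z = 0}"

text \<open>Levi-Civita covariant derivative on S of the velocity u of a curve in S with
  ordinary derivative u': the tangential projection of u'.\<close>
definition cov_S :: "(real^'n \<Rightarrow> real^'n) \<Rightarrow> real^'n \<Rightarrow> real^'n \<Rightarrow> real^'n" where
  "cov_S \<nu> a u' = u' - (u' \<bullet> \<nu> a) *\<^sub>R \<nu> a"

end

theory Submission
  imports Defs
begin

(* Differentiating the no-slip condition a' = r U nu(a) gives a'' = r U' nu - r^2 U S_a(U nu).
   The constraint force N = (U' A, cov a'' + g e) is orthogonal to every no-slip velocity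
   (V A, r V nu) with V skew; pairing with V = wedge c d shows r gamma^2 U' = wedge (cov a'' + g e) nu.
   After substituting a'', the unknown U' reappears through r U' nu, and since
   wedge ((wedge w nu) nu) nu = - wedge w nu for a unit vector nu, that term contributes
   -U'/gamma^2; solving the linear equation produces the factor 1/(1 + gamma^2). *)

lemma invertible_matrix_inv:
  fixes A :: "'a::semiring_1^'n^'n"
  assumes "invertible A"
  shows "A ** matrix_inv A = mat 1" "matrix_inv A ** A = mat 1"
  using someI_ex[OF assms[unfolded invertible_def]] by (auto simp: matrix_inv_def)

lemma SOn_invertible: "A \<in> SOn \<Longrightarrow> invertible A"
  by (auto simp: SOn_def orthogonal_matrix_def invertible_def)

lemma invertible_mult_matrix_inv_cancel:
  fixes A :: "'a::semiring_1^'n^'n"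
  assumes "invertible A"
  shows "(X ** A) ** matrix_inv A = X"
  by (simp add: assms invertible_matrix_inv matrix_mul_assoc[symmetric])

lemma skew_inner_mult_commute:
  fixes V :: "real^'n^'n"
  assumes "transpose V = - V"
  shows "x \<bullet> (V *v y) = - (y \<bullet> (V *v x))"
proof -
  have "x \<bullet> (V *v y) = (transpose V *v x) \<bullet> y"
    by (simp add: dot_lmul_matrix)
  also have "transpose V *v x = - (V *v x)"
    by (simp add: assms vec_eq_iff matrix_vector_mult_def sum_negf)
  finally show ?thesis
    by (simp add: inner_commute)
qed

lemma wedge_add_left: "wedge (a + b) c = wedge a c + wedge b c"
  by (simp add: wedge_def vec_eq_iff algebra_simps)

lemma wedge_diff_left: "wedge (a - b) c = wedge a c - wedge b c"
  by (simp add: wedge_def vec_eq_iff algebra_simps)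

lemma wedge_scaleR_left: "wedge (k *\<^sub>R a) c = k *\<^sub>R wedge a c"
  by (simp add: wedge_def vec_eq_iff algebra_simps)

lemma wedge_self: "wedge a a = 0"
  by (simp add: wedge_def vec_eq_iff)

lemma transpose_wedge: "transpose (wedge a b) = - wedge a b"
  by (simp add: wedge_def transpose_def vec_eq_iff)

lemma wedge_mult_vector: "wedge a b *v x = (a \<bullet> x) *\<^sub>R b - (b \<bullet> x) *\<^sub>R a"
  by (simp add: vec_eq_iff matrix_vector_mult_def wedge_def inner_vec_def
      sum_subtractf sum_distrib_left sum_distrib_right algebra_simps)

lemma trace_mult_transpose_wedge:
  fixes M :: "real^'n^'n"
  shows "trace (M ** transpose (wedge a b)) = b \<bullet> (M *v a) - a \<bullet> (M *v b)"
  by (simp add: trace_def matrix_matrix_mult_def transpose_def wedge_def inner_vec_def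
      matrix_vector_mult_def sum_subtractf sum_distrib_left algebra_simps)

lemma smooth_fun_gradient_differentiable:
  fixes G :: "'a::euclidean_space \<Rightarrow> 'a"
  assumes "smooth_fun \<phi>" and "\<And>x. (\<phi> has_derivative (\<lambda>v. G x \<bullet> v)) (at x)"
  shows "G differentiable (at x)"
proof -
  have "(\<lambda>y. G y \<bullet> v) differentiable (at x)" for v
  proof -
    have "iter_dd [v] \<phi> = (\<lambda>y. G y \<bullet> v)"
      using frechet_derivative_at[OF assms(2)] by (simp add: fun_eq_iff)
    then show ?thesis
      using assms(1) unfolding smooth_fun_def by metis
  qed
  then have "(\<lambda>y. \<Sum>b\<in>Basis. (G y \<bullet> b) *\<^sub>R b) differentiable (at x)"
    by (intro differentiable_sum differentiable_scaleR differentiable_const ballI finite_Basis)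
  then show ?thesis
    by (simp add: euclidean_representation)
qed

lemma smooth_hypersurface_normal:
  assumes "smooth_hypersurface S \<nu>" and "x \<in> S"
  shows "\<nu> differentiable (at x)" and "\<nu> x \<bullet> \<nu> x = 1"
proof -
  obtain \<phi> G where "smooth_fun \<phi>" and G: "\<And>x. (\<phi> has_derivative (\<lambda>v. G x \<bullet> v)) (at x)"
    and "G x \<noteq> 0" and \<nu>: "\<nu> = (\<lambda>y. inverse (norm (G y)) *\<^sub>R G y)"
    using assms unfolding smooth_hypersurface_def by (auto simp: fun_eq_iff)
  have "G differentiable (at x)"
    using smooth_fun_gradient_differentiable[OF \<open>smooth_fun \<phi>\<close> G] .
  moreover have "(\<lambda>y. norm (G y)) differentiable (at x)"
    using differentiable_chain_at[OF calculation differentiable_norm_at[OF \<open>G x \<noteq> 0\<close>]]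
    by (simp add: o_def)
  ultimately show "\<nu> differentiable (at x)"
    unfolding \<nu> using \<open>G x \<noteq> 0\<close>
    by (intro differentiable_scaleR differentiable_inverse) auto
  show "\<nu> x \<bullet> \<nu> x = 1"
    using \<open>G x \<noteq> 0\<close> by (simp add: \<nu> power2_norm_eq_inner[symmetric])
qed

lemma bounded_bilinear_matrix_vector_mult:
  "bounded_bilinear (\<lambda>(M::real^'n^'m) (x::real^'n). M *v x)"
proof -
  have "bilinear (\<lambda>(M::real^'n^'m) (x::real^'n). M *v x)"
    unfolding bilinear_def
    by (auto intro!: linearI simp: algebra_simps scaleR_matrix_vector_assoc)
  then show ?thesis
    by (simp add: bilinear_conv_bounded_bilinear)
qed

lemma no_slip_acceleration:
  fixes U :: "real \<Rightarrow> real^'n^'n" and a a' :: "real \<Rightarrow> real^'n"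
  assumes "open I" and "t \<in> I"
    and slip: "\<forall>s\<in>I. a' s = r *\<^sub>R (U s *v \<nu> (a s))"
    and a: "(a has_vector_derivative a' t) (at t)"
    and U: "(U has_vector_derivative U') (at t)"
    and a': "(a' has_vector_derivative a'') (at t)"
    and \<nu>: "\<nu> differentiable (at (a t))"
  shows "a'' = r *\<^sub>R (U' *v \<nu> (a t)) - r\<^sup>2 *\<^sub>R (U t *v shape_op \<nu> (a t) (U t *v \<nu> (a t)))"
proof -
  define D where "D = frechet_derivative \<nu> (at (a t))"
  have D: "(\<nu> has_derivative D) (at (a t))"
    using \<nu> unfolding D_def frechet_derivative_works .
  then have "linear D"
    by (rule has_derivative_linear)
  have "((\<nu> \<circ> a) has_derivative D \<circ> (\<lambda>h. h *\<^sub>R a' t)) (at t)"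
    using diff_chain_at a D unfolding has_vector_derivative_def by blast
  then have \<nu>a: "((\<lambda>s. \<nu> (a s)) has_vector_derivative D (a' t)) (at t)"
    using \<open>linear D\<close> by (simp add: has_vector_derivative_def o_def linear_scale)
  have "((\<lambda>s. r *\<^sub>R (U s *v \<nu> (a s))) has_vector_derivative
          r *\<^sub>R (U t *v D (a' t) + U' *v \<nu> (a t))) (at t)"
    using bounded_linear.has_vector_derivative[OF bounded_linear_scaleR_right
        bounded_bilinear.has_vector_derivative[OF bounded_bilinear_matrix_vector_mult U \<nu>a]]
    by simp
  then have "(a' has_vector_derivative r *\<^sub>R (U t *v D (a' t) + U' *v \<nu> (a t))) (at t)"
    by (rule has_vector_derivative_transform_within_open[OF _ \<open>open I\<close> \<open>t \<in> I\<close>]) (simp add: slip)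
  then have "a'' = r *\<^sub>R (U t *v D (a' t) + U' *v \<nu> (a t))"
    using a' vector_derivative_unique_at by blast
  moreover have "D (a' t) = - (r *\<^sub>R shape_op \<nu> (a t) (U t *v \<nu> (a t)))"
    using \<open>linear D\<close> \<open>t \<in> I\<close> slip by (simp add: shape_op_def D_def linear_scale)
  ultimately show ?thesis
    by (simp add: linear_neg[OF matrix_vector_mul_linear] algebra_simps power2_eq_square)
qed

lemma noslip_perp_rotation_part:
  fixes X :: "real^'n^'n"
  assumes "invertible A" and "m \<noteq> 0" and "r \<noteq> 0"
    and perp: "(X ** A, w) \<in> noslip_perp m r \<gamma> \<nu> A a"
  shows "(r * \<gamma>\<^sup>2) *\<^sub>R X = wedge w (\<nu> a)"
proof -
  have X: "transpose X = - X"
    using perp \<open>invertible A\<close>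
    by (simp add: noslip_perp_def tangent_M_def son_def invertible_mult_matrix_inv_cancel)
  have "d \<bullet> (((r * \<gamma>\<^sup>2) *\<^sub>R X) *v c) = d \<bullet> (wedge w (\<nu> a) *v c)" for c d
  proof -
    let ?V = "wedge c d"
    have "(?V ** A, r *\<^sub>R (?V *v \<nu> a)) \<in> noslip r \<nu> A a"
      using skew_inner_mult_commute[OF transpose_wedge[of c d], of "\<nu> a" "\<nu> a"] \<open>invertible A\<close>
      by (simp add: noslip_def tangent_M_def tangent_S_def son_def transpose_wedge
          invertible_mult_matrix_inv_cancel inner_commute)
    then have "kin_metric m r \<gamma> A (X ** A, w) (?V ** A, r *\<^sub>R (?V *v \<nu> a)) = 0"
      using perp by (auto simp: noslip_perp_def)
    then have "(r * \<gamma>)\<^sup>2 / 2 * (d \<bullet> (X *v c) - c \<bullet> (X *v d))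
        + r * ((c \<bullet> \<nu> a) * (w \<bullet> d) - (d \<bullet> \<nu> a) * (w \<bullet> c)) = 0"
      using \<open>m \<noteq> 0\<close> \<open>invertible A\<close>
      by (simp add: kin_metric_def invertible_mult_matrix_inv_cancel trace_mult_transpose_wedge
          wedge_mult_vector inner_diff_right)
    then have "r * ((r * \<gamma>\<^sup>2) * (d \<bullet> (X *v c)) + (d \<bullet> w) * (c \<bullet> \<nu> a))
        = r * ((c \<bullet> w) * (d \<bullet> \<nu> a))"
      using skew_inner_mult_commute[OF X, of c d]
      by (simp add: algebra_simps power2_eq_square inner_commute)
    then have "(r * \<gamma>\<^sup>2) * (d \<bullet> (X *v c)) + (d \<bullet> w) * (c \<bullet> \<nu> a) = (c \<bullet> w) * (d \<bullet> \<nu> a)"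
      using \<open>r \<noteq> 0\<close> by simp
    then show ?thesis
      by (simp add: wedge_mult_vector scaleR_matrix_vector_assoc[symmetric] algebra_simps inner_commute)
  qed
  then show ?thesis
    by (auto simp: matrix_eq intro: vector_eq_ldot[THEN iffD1])
qed

lemma wedge_normal_equation_solve:
  assumes "\<nu> \<bullet> \<nu> = 1" and "\<gamma> \<noteq> 0" and "r \<noteq> 0"
    and U': "(r * \<gamma>\<^sup>2) *\<^sub>R U' = wedge W \<nu>"
    and W: "W = r *\<^sub>R (U' *v \<nu>) + X + c *\<^sub>R \<nu>"
  shows "U' = (1 / ((1 + \<gamma>\<^sup>2) * r)) *\<^sub>R wedge X \<nu>"
proof -
  have "(r * \<gamma>\<^sup>2) *\<^sub>R (U' *v \<nu>) = (W \<bullet> \<nu>) *\<^sub>R \<nu> - W"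
    using U' \<open>\<nu> \<bullet> \<nu> = 1\<close> by (simp add: scaleR_matrix_vector_assoc wedge_mult_vector)
  from arg_cong[OF this, of "\<lambda>x. wedge x \<nu>"]
  have "(r * \<gamma>\<^sup>2) *\<^sub>R wedge (U' *v \<nu>) \<nu> = - wedge W \<nu>"
    by (simp add: wedge_scaleR_left wedge_diff_left wedge_self)
  moreover have "\<gamma>\<^sup>2 *\<^sub>R wedge W \<nu> = (r * \<gamma>\<^sup>2) *\<^sub>R wedge (U' *v \<nu>) \<nu> + \<gamma>\<^sup>2 *\<^sub>R wedge X \<nu>"
    by (subst W) (simp add: wedge_add_left wedge_scaleR_left wedge_self scaleR_add_right)
  ultimately have "(1 + \<gamma>\<^sup>2) *\<^sub>R wedge W \<nu> = \<gamma>\<^sup>2 *\<^sub>R wedge X \<nu>"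
    by (simp add: scaleR_add_left)
  then have "\<gamma>\<^sup>2 *\<^sub>R ((1 + \<gamma>\<^sup>2) * r) *\<^sub>R U' = \<gamma>\<^sup>2 *\<^sub>R wedge X \<nu>"
    by (simp add: U'[symmetric] algebra_simps)
  then have scaled: "((1 + \<gamma>\<^sup>2) * r) *\<^sub>R U' = wedge X \<nu>"
    using \<open>\<gamma> \<noteq> 0\<close> by (simp only: scaleR_cancel_left) simp
  have "(1 + \<gamma>\<^sup>2) * r \<noteq> 0"
    using \<open>r \<noteq> 0\<close> by (metis add_pos_nonneg mult_eq_0_iff zero_le_power2 zero_less_one less_irrefl)
  then show ?thesis
    by (simp flip: scaled)
qed

theorem proposition4p1:
  fixes S :: "(real^'n) set" and \<nu> :: "real^'n \<Rightarrow> real^'n" and e :: "real^'n"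
    and m r \<gamma> g :: real and I :: "real set"
    and A A' U' :: "real \<Rightarrow> real^'n^'n" and a a' a'' :: "real \<Rightarrow> real^'n"
  defines "U \<equiv> (\<lambda>t. A' t ** matrix_inv (A t))"
  assumes cyl: "cylinder_hypersurface S \<nu> e"
    and m_pos: "m > 0" and r_pos: "r > 0" and \<gamma>_pos: "\<gamma> > 0"
    and I_open: "open I"
    and A_SO: "\<forall>t\<in>I. A t \<in> SOn"
    and a_S: "\<forall>t\<in>I. a t \<in> S"
    and A_deriv: "\<forall>t\<in>I. (A has_vector_derivative A' t) (at t)"
    and U_deriv: "\<forall>t\<in>I. (U has_vector_derivative U' t) (at t)"
    and a_deriv: "\<forall>t\<in>I. (a has_vector_derivative a' t) (at t)"
    and a'_deriv: "\<forall>t\<in>I. (a' has_vector_derivative a'' t) (at t)"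
    and no_slip: "\<forall>t\<in>I. (A' t, a' t) \<in> noslip r \<nu> (A t) (a t)"
    and newton: "\<forall>t\<in>I. \<exists>N \<in> noslip_perp m r \<gamma> \<nu> (A t) (a t).
                   (U' t ** A t, cov_S \<nu> (a t) (a'' t))
                     = (1 / m) *\<^sub>R (0, - (m * g) *\<^sub>R e) + N"
  shows "\<forall>t\<in>I.
           a' t = r *\<^sub>R (U t *v \<nu> (a t))
         \<and> A' t = U t ** A t
         \<and> U' t = - (1 / ((1 + \<gamma>\<^sup>2) * r)) *\<^sub>R
              wedge (r\<^sup>2 *\<^sub>R (U t *v shape_op \<nu> (a t) (U t *v \<nu> (a t))) - g *\<^sub>R e) (\<nu> (a t))"
proof
  fix t assume t: "t \<in> I"
  have \<nu>: "\<nu> differentiable (at (a t))" "\<nu> (a t) \<bullet> \<nu> (a t) = 1"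
    using cyl a_S t by (auto simp: cylinder_hypersurface_def intro: smooth_hypersurface_normal)
  have A: "invertible (A t)"
    using A_SO t SOn_invertible by blast
  have slip: "\<forall>s\<in>I. a' s = r *\<^sub>R (U s *v \<nu> (a s))"
    using no_slip by (auto simp: noslip_def U_def)
  define Y where "Y = U t *v shape_op \<nu> (a t) (U t *v \<nu> (a t))"
  have a'': "a'' t = r *\<^sub>R (U' t *v \<nu> (a t)) - r\<^sup>2 *\<^sub>R Y"
    unfolding Y_def
    using no_slip_acceleration[where a = a and a' = a' and U = U and \<nu> = \<nu>, OF I_open t slip]
      a_deriv U_deriv a'_deriv t \<nu>(1)
    by blast
  obtain N where "N \<in> noslip_perp m r \<gamma> \<nu> (A t) (a t)"
    and "(U' t ** A t, cov_S \<nu> (a t) (a'' t)) = (1 / m) *\<^sub>R (0, - (m * g) *\<^sub>R e) + N"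
    using newton t by blast
  then have "(U' t ** A t, cov_S \<nu> (a t) (a'' t) + g *\<^sub>R e) \<in> noslip_perp m r \<gamma> \<nu> (A t) (a t)"
    using m_pos by (auto simp: prod_eq_iff)
  then have rotation: "(r * \<gamma>\<^sup>2) *\<^sub>R U' t = wedge (cov_S \<nu> (a t) (a'' t) + g *\<^sub>R e) (\<nu> (a t))"
    using A m_pos r_pos by (intro noslip_perp_rotation_part) auto
  have "cov_S \<nu> (a t) (a'' t) + g *\<^sub>R e
      = r *\<^sub>R (U' t *v \<nu> (a t)) + (g *\<^sub>R e - r\<^sup>2 *\<^sub>R Y) + (- (a'' t \<bullet> \<nu> (a t))) *\<^sub>R \<nu> (a t)"
    by (simp add: cov_S_def a'' algebra_simps)
  from wedge_normal_equation_solve[OF \<nu>(2) _ _ rotation this]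
  have "U' t = (1 / ((1 + \<gamma>\<^sup>2) * r)) *\<^sub>R wedge (g *\<^sub>R e - r\<^sup>2 *\<^sub>R Y) (\<nu> (a t))"
    using \<gamma>_pos r_pos by simp
  moreover have "A' t = U t ** A t"
    using A by (simp add: U_def matrix_mul_assoc[symmetric] invertible_matrix_inv)
  ultimately show "a' t = r *\<^sub>R (U t *v \<nu> (a t)) \<and> A' t = U t ** A t
    \<and> U' t = - (1 / ((1 + \<gamma>\<^sup>2) * r)) *\<^sub>R
        wedge (r\<^sup>2 *\<^sub>R (U t *v shape_op \<nu> (a t) (U t *v \<nu> (a t))) - g *\<^sub>R e) (\<nu> (a t))"
    using slip t by (simp add: Y_def wedge_diff_left scaleR_diff_right)
qed

end
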